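(* Let $n,m$ be positive integers with $2(m+1)\le n$. Then $\gamma_{gr}(C_n^m)=n-2m$.
   Context: $C_n^m$ has vertex set $[n]$, distinct vertices adjacent iff their distance in the cycle $1,2,\dots,n,1$ is at most $m$. $\gamma_{gr}$ is the Grundy domination number: the maximum length of a sequence $(v_1,\dots,v_k)$ of distinct vertices whose set is dominating and such that each $N[v_i]\setminus\bigcup_{j<i}N[v_j]$ is non-empty ($N[\cdot]$ the closed neighborhood). *)

theory Defs
  imports Main
begin

definition cyc_dist :: "nat \<Rightarrow> nat \<Rightarrow> nat \<Rightarrow> nat" where
  "cyc_dist n i j = min (if i \<le> j then j - i else i - j) (n - (if i \<le> j then j - i else i - j))"

definition cpow_adj :: "nat \<Rightarrow> nat \<Rightarrow> nat \<Rightarrow> nat \<Rightarrow> bool" where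
  "cpow_adj n m u v \<longleftrightarrow> u \<in> {1..n} \<and> v \<in> {1..n} \<and> u \<noteq> v \<and> cyc_dist n u v \<le> m"

definition cpow_cnbhd :: "nat \<Rightarrow> nat \<Rightarrow> nat \<Rightarrow> nat set" where
  "cpow_cnbhd n m v = {u \<in> {1..n}. u = v \<or> cpow_adj n m v u}"

text \<open>Grundy dominating sequences of a graph given by vertex set V and closed neighbourhoods N.\<close>
definition grundy_dom_seq :: "'a set \<Rightarrow> ('a \<Rightarrow> 'a set) \<Rightarrow> 'a list \<Rightarrow> bool" where
  "grundy_dom_seq V N vs \<longleftrightarrow>
     distinct vs \<and> set vs \<subseteq> V \<and>
     (\<Union>v\<in>set vs. N v) = V \<and>
     (\<forall>i < length vs. N (vs ! i) - (\<Union>j<i. N (vs ! j)) \<noteq> {})"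

definition grundy_dom_number :: "'a set \<Rightarrow> ('a \<Rightarrow> 'a set) \<Rightarrow> nat" where
  "grundy_dom_number V N = Max (length ` {vs. grundy_dom_seq V N vs})"

end

(* Each vertex of a Grundy dominating sequence dominates a vertex not dominated before it, so
   the dominated set starts with the 2m + 1 vertices of a closed neighbourhood and grows by at
   least one per further vertex; hence the length is at most n - 2m.  Conversely 1, 2, ..., n - 2m
   is a Grundy dominating sequence: vertex i is the first to dominate i + m, and the whole cycle is
   covered by the neighbourhood of 1 together with the vertices 2, ..., n - 2m. *)

theory Submission
  imports Defs
begin

lemma grundy_dom_number_eqI:
  assumes "finite V"
    and "\<And>vs. grundy_dom_seq V N vs \<Longrightarrow> length vs \<le> k"
    and "grundy_dom_seq V N ws" "length ws = k"
  shows "grundy_dom_number V N = k"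
proof -
  let ?L = "length ` {vs. grundy_dom_seq V N vs}"
  have "?L \<subseteq> {..k}" using assms(2) by auto
  then have "finite ?L" by (rule finite_subset) simp
  moreover have "k \<in> ?L" using assms(3,4) by blast
  ultimately show ?thesis
    unfolding grundy_dom_number_def using assms(2) by (intro Max_eqI) auto
qed

lemma grundy_dom_seq_length_le:
  assumes seq: "grundy_dom_seq V N vs" and "finite V"
    and min_card: "\<And>v. v \<in> V \<Longrightarrow> d \<le> card (N v)"
  shows "length vs \<le> card V + 1 - d"
proof (cases "vs = []")
  case False
  define dominated where "dominated i = (\<Union>j<i. N (vs ! j))" for i
  have dominated_all: "dominated (length vs) = V"
    using seq unfolding grundy_dom_seq_def dominated_def by (force simp: in_set_conv_nth)
  have dominated_mono: "dominated i \<subseteq> dominated (length vs)" if "i \<le> length vs" for i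
    unfolding dominated_def using that by (intro UN_mono) auto
  have "d + i \<le> card (dominated (Suc i))" if "i < length vs" for i
    using that
  proof (induction i)
    case 0
    have "vs ! 0 \<in> V"
      using seq 0 unfolding grundy_dom_seq_def by (auto dest: nth_mem)
    then show ?case using min_card by (simp add: dominated_def lessThan_Suc)
  next
    case (Suc i)
    have "dominated (Suc (Suc i)) = dominated (Suc i) \<union> N (vs ! Suc i)"
      by (simp add: dominated_def lessThan_Suc Un_commute)
    moreover have "\<not> N (vs ! Suc i) \<subseteq> dominated (Suc i)"
      using seq Suc.prems unfolding grundy_dom_seq_def dominated_def by blast
    ultimately have "dominated (Suc i) \<subset> dominated (Suc (Suc i))" by blast
    moreover have "finite (dominated (Suc (Suc i)))"
      using dominated_mono[of "Suc (Suc i)"] Suc.prems dominated_all \<open>finite V\<close>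
      by (auto intro: finite_subset)
    ultimately have "card (dominated (Suc i)) < card (dominated (Suc (Suc i)))"
      by (rule psubset_card_mono[rotated])
    then show ?case using Suc by simp
  qed
  from this[of "length vs - 1"] False dominated_all show ?thesis by simp
qed simp

lemma cyc_dist_le_iff:
  "cyc_dist n i j \<le> m \<longleftrightarrow>
     (i \<le> j + m \<and> j \<le> i + m) \<or> n + j \<le> i + m \<or> n + i \<le> j + m"
  unfolding cyc_dist_def by auto

lemma mem_cpow_cnbhd_iff:
  "u \<in> cpow_cnbhd n m v \<longleftrightarrow>
     u \<in> {1..n} \<and> (u = v \<or> v \<in> {1..n} \<and> cyc_dist n v u \<le> m)"
  unfolding cpow_cnbhd_def cpow_adj_def by auto

lemma cpow_cnbhd_subset: "cpow_cnbhd n m v \<subseteq> {1..n}"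
  unfolding cpow_cnbhd_def by auto

lemma card_cpow_cnbhd_ge:
  assumes v: "v \<in> {1..n}" and "2 * m < n"
  shows "2 * m + 1 \<le> card (cpow_cnbhd n m v)"
proof -
  consider "m < v \<and> v + m \<le> n" | "v \<le> m" | "n < v + m" by linarith
  then obtain A where "A \<subseteq> cpow_cnbhd n m v" "card A = 2 * m + 1"
  proof cases
    case 1
    show ?thesis
      by (rule that[of "{v - m..v + m}"])
        (use 1 v in \<open>auto simp: mem_cpow_cnbhd_iff cyc_dist_le_iff\<close>)
  next
    case 2
    show ?thesis
      by (rule that[of "{1..v + m} \<union> {n + v - m..n}"])
        (use 2 v \<open>2 * m < n\<close> in \<open>auto simp: mem_cpow_cnbhd_iff cyc_dist_le_iff card_Un_disjoint\<close>)
  next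
    case 3
    show ?thesis
      by (rule that[of "{v - m..n} \<union> {1..v + m - n}"])
        (use 3 v \<open>2 * m < n\<close> in \<open>auto simp: mem_cpow_cnbhd_iff cyc_dist_le_iff card_Un_disjoint\<close>)
  qed
  moreover have "finite (cpow_cnbhd n m v)"
    using cpow_cnbhd_subset by (rule finite_subset) simp
  ultimately show ?thesis by (metis card_mono)
qed

lemma grundy_dom_seq_cpow_upt:
  assumes "2 * m < n"
  shows "grundy_dom_seq {1..n} (cpow_cnbhd n m) [1..<n - 2 * m + 1]"
proof -
  let ?vs = "[1..<n - 2 * m + 1]"
  have "u \<in> (\<Union>v\<in>set ?vs. cpow_cnbhd n m v)" if u: "u \<in> {1..n}" for u
  proof (cases "m + 1 < u \<and> u \<le> n - m")
    case True
    then have "u \<in> cpow_cnbhd n m (u - m)" "u - m \<in> set ?vs"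
      using u by (auto simp: mem_cpow_cnbhd_iff cyc_dist_le_iff)
    then show ?thesis by blast
  next
    case False
    then have "u \<in> cpow_cnbhd n m 1" "1 \<in> set ?vs"
      using u assms by (auto simp: mem_cpow_cnbhd_iff cyc_dist_le_iff)
    then show ?thesis by blast
  qed
  then have dominating: "(\<Union>v\<in>set ?vs. cpow_cnbhd n m v) = {1..n}"
    using cpow_cnbhd_subset by blast
  have "cpow_cnbhd n m (?vs ! i) - (\<Union>j<i. cpow_cnbhd n m (?vs ! j)) \<noteq> {}"
    if "i < length ?vs" for i
  proof -
    have i: "i < n - 2 * m"
      using that by (simp del: upt_Suc)
    have nth_vs: "?vs ! j = Suc j" if "j \<le> i" for j
      using that i by (simp del: upt_Suc)
    have "Suc i + m \<in> cpow_cnbhd n m (Suc i)"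
      using i by (auto simp: mem_cpow_cnbhd_iff cyc_dist_le_iff)
    moreover have "Suc i + m \<notin> cpow_cnbhd n m (Suc j)" if "j < i" for j
      using i that by (auto simp: mem_cpow_cnbhd_iff cyc_dist_le_iff)
    ultimately show ?thesis
      using nth_vs by auto
  qed
  with dominating show ?thesis
    unfolding grundy_dom_seq_def by auto
qed

theorem corollary1:
  fixes n m :: nat
  assumes "0 < n" and "0 < m" and "2 * (m + 1) \<le> n"
  shows "grundy_dom_number {1..n} (cpow_cnbhd n m) = n - 2 * m"
proof (rule grundy_dom_number_eqI)
  have "2 * m < n" using assms(3) by simp
  show "length vs \<le> n - 2 * m" if "grundy_dom_seq {1..n} (cpow_cnbhd n m) vs" for vs
    using grundy_dom_seq_length_le[OF that _ card_cpow_cnbhd_ge[OF _ \<open>2 * m < n\<close>]] by simp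
  show "grundy_dom_seq {1..n} (cpow_cnbhd n m) [1..<n - 2 * m + 1]"
    using \<open>2 * m < n\<close> by (rule grundy_dom_seq_cpow_upt)
qed (simp_all del: upt_Suc)

end
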